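(* Consider an MG-SPA as described in the context with $0\le\gamma<1$, and suppose that: (i) $|r^i(s,a,b)|\le M^i<M<\infty$ for all $i,a,b,s$; (ii) $S$, all $A^i$ and all $B^{\tilde i}$ are finite; (iii) transition probabilities and rewards are stationary; (iv) for every fixed $s\in S$, $f(s,\cdot)$ is a bijection; (v) all agents share one common reward function. Then the minimax operator $L$ is a contraction mapping on $\mathbb V$ (with modulus $\gamma$), i.e. $\|Lv-Lu\|\le\gamma\|v-u\|$ for all $u,v\in\mathbb V$.
   Context: An MG-SPA consists of: agents $\mathcal N=\{1,\dots,N\}$ and adversaries $\mathcal M=\{\tilde 1,\dots,\tilde N\}$ (adversary $\tilde i$ paired with agent $i$); state space $S$; agent action sets $A^i$, joint $A=\prod_iA^i$; adversary action sets $B^{\tilde i}$, joint $B=\prod B^{\tilde i}$; rewards $r^i:S\times A\times B\to\mathbb R$; transition kernel $p:S\times A\times B\to\Delta(S)$; a perturbation function $f$ with $f(s,b^{\tilde i})\in\mathcal B(\epsilon,s)\subset S$; discount $\gamma$. Given true state $s$, adversary $\tilde i$ draws $b^{\tilde i}\sim\rho^{\tilde i}(\cdot\mid s)$, agent $i$ observes $\tilde s^i=f(s,b^{\tilde i})$ and draws $a^i\sim\pi^i(\cdot\mid\tilde s^i)$, next state $\sim p(\cdot\mid s,a,b)$; agent $i$ gets $r^i$, adversary $\tilde i$ gets $-r^i$. Value functions $v^{\pi,\rho,i}(s)=\mathbb E[\sum_{t\ge1}\gamma^{t-1}r^i_t\mid s_1=s]$. A robust equilibrium $(\pi_*,\rho_*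 )$ is a joint policy with $v^{(\pi_*^{-i},\pi_*^i,\rho_*^{-\tilde i},\rho^{\tilde i}),i}(s)\ge v^{(\pi_*,\rho_* ),i}(s)\ge v^{(\pi_*^{-i},\pi^i,\rho_*^{-\tilde i},\rho_*^{\tilde i}),i}(s)$ for all $i,s,\pi^i,\rho^{\tilde i}$. $V$ is the set of bounded real functions on $S$ with sup norm; $\mathbb V=V^N$ with $\|v\|=\sup_j\|v^j\|$. For a joint policy $d$, $r_d^i$ is the expected one-step reward vector of agent $i$ and $P_d$ the induced transition matrix. Minimax operator: $L^iv^i(s)=\max_{\pi^i}\min_{\rho^{\tilde i}}[r^i_d+\gamma P_dv^i](s)$ with $d=(\pi_*^{-i},\pi^i,\rho_*^{-\tilde i},\rho^{\tilde i})$ ($\pi_*^{-i},\rho_*^{-\tilde i}$ the other players' robust-equilibrium policies), and $Lv=(L^1v^1,\dots,L^Nv^N)$. *)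

theory Defs
  imports "HOL-Analysis.Analysis"
begin

text \<open>Agents are indexed by 0..<nag; adversary i is paired with agent i. Rewards and transitions are stationary
  (they do not depend on time). pert is the perturbation function f, nbhd s is the set
  B(eps,s).\<close>
record ('s, 'a, 'b) mgspa =
  nag :: nat
  states :: "'s set"
  acts :: "nat \<Rightarrow> 'a set"
  advs :: "nat \<Rightarrow> 'b set"
  rew :: "nat \<Rightarrow> 's \<Rightarrow> (nat \<Rightarrow> 'a) \<Rightarrow> (nat \<Rightarrow> 'b) \<Rightarrow> real"
  trans :: "'s \<Rightarrow> (nat \<Rightarrow> 'a) \<Rightarrow> (nat \<Rightarrow> 'b) \<Rightarrow> 's \<Rightarrow> real"
  pert :: "'s \<Rightarrow> 'b \<Rightarrow> 's"
  nbhd :: "'s \<Rightarrow> 's set"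
  disc :: real

definition jacts :: "('s,'a,'b) mgspa \<Rightarrow> (nat \<Rightarrow> 'a) set" where
  "jacts G = PiE {..<nag G} (acts G)"

definition jadvs :: "('s,'a,'b) mgspa \<Rightarrow> (nat \<Rightarrow> 'b) set" where
  "jadvs G = PiE {..<nag G} (advs G)"

definition dist_on :: "'x set \<Rightarrow> ('x \<Rightarrow> real) \<Rightarrow> bool" where
  "dist_on X q \<longleftrightarrow> (\<forall>x\<in>X. 0 \<le> q x) \<and> sum q X = 1"

definition policies :: "'s set \<Rightarrow> 'x set \<Rightarrow> ('s \<Rightarrow> 'x \<Rightarrow> real) set" where
  "policies S X = {pol. \<forall>s\<in>S. dist_on X (pol s)}"

definition mgspa_wf :: "('s,'a,'b) mgspa \<Rightarrow> bool" where
  "mgspa_wf G \<longleftrightarrow>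
     (\<forall>s\<in>states G. \<forall>a\<in>jacts G. \<forall>b\<in>jadvs G. dist_on (states G) (trans G s a b)) \<and>
     (\<forall>s\<in>states G. nbhd G s \<subseteq> states G) \<and>
     (\<forall>s\<in>states G. \<forall>i<nag G. \<forall>b\<in>advs G i. pert G s b \<in> nbhd G s)"

text \<open>Probability of joint actions (a,b) in true state s under the joint policy (pol,rho):
  adversary i draws b_i ~ rho_i(.|s), agent i draws a_i ~ pi_i(.|f(s,b_i)).\<close>
definition jprob :: "('s,'a,'b) mgspa \<Rightarrow> (nat \<Rightarrow> 's \<Rightarrow> 'a \<Rightarrow> real) \<Rightarrow> (nat \<Rightarrow> 's \<Rightarrow> 'b \<Rightarrow> real)
    \<Rightarrow> 's \<Rightarrow> (nat \<Rightarrow> 'a) \<Rightarrow> (nat \<Rightarrow> 'b) \<Rightarrow> real" where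
  "jprob G pol rho s a b =
     (\<Prod>j<nag G. rho j s (b j)) * (\<Prod>j<nag G. pol j (pert G s (b j)) (a j))"

definition exp_reward :: "('s,'a,'b) mgspa \<Rightarrow> (nat \<Rightarrow> 's \<Rightarrow> 'a \<Rightarrow> real) \<Rightarrow> (nat \<Rightarrow> 's \<Rightarrow> 'b \<Rightarrow> real)
    \<Rightarrow> nat \<Rightarrow> 's \<Rightarrow> real" where
  "exp_reward G pol rho i s =
     (\<Sum>b\<in>jadvs G. \<Sum>a\<in>jacts G. jprob G pol rho s a b * rew G i s a b)"

definition trans_mat :: "('s,'a,'b) mgspa \<Rightarrow> (nat \<Rightarrow> 's \<Rightarrow> 'a \<Rightarrow> real) \<Rightarrow> (nat \<Rightarrow> 's \<Rightarrow> 'b \<Rightarrow> real)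
    \<Rightarrow> 's \<Rightarrow> 's \<Rightarrow> real" where
  "trans_mat G pol rho s s' =
     (\<Sum>b\<in>jadvs G. \<Sum>a\<in>jacts G. jprob G pol rho s a b * trans G s a b s')"

definition apply_P :: "('s,'a,'b) mgspa \<Rightarrow> (nat \<Rightarrow> 's \<Rightarrow> 'a \<Rightarrow> real) \<Rightarrow> (nat \<Rightarrow> 's \<Rightarrow> 'b \<Rightarrow> real)
    \<Rightarrow> ('s \<Rightarrow> real) \<Rightarrow> 's \<Rightarrow> real" where
  "apply_P G pol rho v s = (\<Sum>s'\<in>states G. trans_mat G pol rho s s' * v s')"

text \<open>v^{pol,rho,i}(s) = E[sum_{t>=1} gamma^(t-1) r_t^i | s_1 = s] = sum_t gamma^t (P_d^t r_d^i)(s).\<close>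
definition value_fun :: "('s,'a,'b) mgspa \<Rightarrow> (nat \<Rightarrow> 's \<Rightarrow> 'a \<Rightarrow> real) \<Rightarrow> (nat \<Rightarrow> 's \<Rightarrow> 'b \<Rightarrow> real)
    \<Rightarrow> nat \<Rightarrow> 's \<Rightarrow> real" where
  "value_fun G pol rho i s =
     (\<Sum>t. disc G ^ t * ((apply_P G pol rho ^^ t) (exp_reward G pol rho i) s))"

definition robust_eq :: "('s,'a,'b) mgspa \<Rightarrow> (nat \<Rightarrow> 's \<Rightarrow> 'a \<Rightarrow> real) \<Rightarrow> (nat \<Rightarrow> 's \<Rightarrow> 'b \<Rightarrow> real) \<Rightarrow> bool" where
  "robust_eq G pis rhos \<longleftrightarrow>
     (\<forall>i<nag G. pis i \<in> policies (states G) (acts G i) \<and> rhos i \<in> policies (states G) (advs G i)) \<and>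
     (\<forall>i<nag G. \<forall>s\<in>states G.
        \<forall>pol'\<in>policies (states G) (acts G i). \<forall>rho'\<in>policies (states G) (advs G i).
          value_fun G pis (rhos(i := rho')) i s \<ge> value_fun G pis rhos i s \<and>
          value_fun G pis rhos i s \<ge> value_fun G (pis(i := pol')) rhos i s)"

text \<open>Minimax operator L^i (max/min over policies, rendered as SUP/INF),
  the other players fixed at (pi_*, rho_*).\<close>
definition minimax_op :: "('s,'a,'b) mgspa \<Rightarrow> (nat \<Rightarrow> 's \<Rightarrow> 'a \<Rightarrow> real) \<Rightarrow> (nat \<Rightarrow> 's \<Rightarrow> 'b \<Rightarrow> real)
    \<Rightarrow> nat \<Rightarrow> ('s \<Rightarrow> real) \<Rightarrow> 's \<Rightarrow> real" where
  "minimax_op G pis rhos i vi s =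
     (SUP pol'\<in>policies (states G) (acts G i). INF rho'\<in>policies (states G) (advs G i).
        exp_reward G (pis(i := pol')) (rhos(i := rho')) i s
        + disc G * apply_P G (pis(i := pol')) (rhos(i := rho')) vi s)"

definition L_op :: "('s,'a,'b) mgspa \<Rightarrow> (nat \<Rightarrow> 's \<Rightarrow> 'a \<Rightarrow> real) \<Rightarrow> (nat \<Rightarrow> 's \<Rightarrow> 'b \<Rightarrow> real)
    \<Rightarrow> (nat \<Rightarrow> 's \<Rightarrow> real) \<Rightarrow> nat \<Rightarrow> 's \<Rightarrow> real" where
  "L_op G pis rhos v = (\<lambda>i. minimax_op G pis rhos i (v i))"

text \<open>Norm on the product space: sup_j sup_s |v^j(s)| (S finite; 0 included for the empty case).\<close>
definition normV :: "('s,'a,'b) mgspa \<Rightarrow> (nat \<Rightarrow> 's \<Rightarrow> real) \<Rightarrow> real" where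
  "normV G v = Max (insert 0 {\<bar>v i s\<bar> | i s. i < nag G \<and> s \<in> states G})"

end

theory Submission
  imports Defs
begin

text \<open>For fixed opponents, the bracket \<open>r\<^sub>d + \<gamma> P\<^sub>d v\<close> inside \<open>L\<^sup>i\<close> depends on \<open>v\<close> only
  through \<open>P\<^sub>d v\<close>, and \<open>P\<^sub>d\<close> is a stochastic matrix, so it moves by at most \<open>\<gamma> \<parallel>v - u\<parallel>\<close> when
  \<open>v\<close> is replaced by \<open>u\<close>. Taking a supremum of infima over the same index sets does not
  increase a uniform bound on the difference.\<close>

lemma abs_cSUP_diff_le:
  fixes f g :: "'x \<Rightarrow> real"
  assumes close: "\<And>x. x \<in> A \<Longrightarrow> \<bar>f x - g x\<bar> \<le> c" and "0 \<le> c"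
  shows "\<bar>(SUP x\<in>A. f x) - (SUP x\<in>A. g x)\<bar> \<le> c"
proof (cases "A = {}")
  case True
  then show ?thesis using \<open>0 \<le> c\<close> by simp
next
  case ne: False
  have f_le: "f x \<le> g x + c" and g_le: "g x \<le> f x + c" if "x \<in> A" for x
    using close[OF that] by (auto simp: abs_le_iff)
  have bdd_shift: "bdd_above (h ` A)" if "bdd_above (k ` A)" "\<And>x. x \<in> A \<Longrightarrow> h x \<le> k x + c"
    for h k :: "'x \<Rightarrow> real"
  proof -
    obtain K where "\<And>x. x \<in> A \<Longrightarrow> k x \<le> K"
      using \<open>bdd_above (k ` A)\<close> by (auto simp: bdd_above_def)
    then show ?thesis
      unfolding bdd_above_def using that(2) by (intro exI[of _ "K + c"]) force
  qed
  have bdd_iff: "bdd_above (f ` A) \<longleftrightarrow> bdd_above (g ` A)"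
  proof
    assume "bdd_above (f ` A)"
    then show "bdd_above (g ` A)" using g_le by (rule bdd_shift)
  next
    assume "bdd_above (g ` A)"
    then show "bdd_above (f ` A)" using f_le by (rule bdd_shift)
  qed
  show ?thesis
  proof (cases "bdd_above (f ` A)")
    case bdd_f: True
    with bdd_iff have bdd_g: "bdd_above (g ` A)" by simp
    have "(SUP x\<in>A. f x) \<le> (SUP x\<in>A. g x) + c"
    proof (rule cSUP_least[OF ne])
      fix x assume "x \<in> A"
      with f_le cSUP_upper[OF _ bdd_g] show "f x \<le> (SUP x\<in>A. g x) + c"
        by fastforce
    qed
    moreover have "(SUP x\<in>A. g x) \<le> (SUP x\<in>A. f x) + c"
    proof (rule cSUP_least[OF ne])
      fix x assume "x \<in> A"
      with g_le cSUP_upper[OF _ bdd_f] show "g x \<le> (SUP x\<in>A. f x) + c"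
        by fastforce
    qed
    ultimately show ?thesis by (simp add: abs_le_iff)
  next
    case False
    with bdd_iff have "\<not> bdd_above (g ` A)" by simp
    \<comment> \<open>Both suprema are the junk value \<open>LEAST z. False\<close>.\<close>
    with False have "(\<lambda>z. \<forall>y\<in>f ` A. y \<le> z) = (\<lambda>z. \<forall>y\<in>g ` A. y \<le> z)"
      unfolding bdd_above_def by (intro ext) (meson not_le)
    then have "(SUP x\<in>A. f x) = (SUP x\<in>A. g x)"
      unfolding Sup_real_def by (rule arg_cong[where f = Least])
    then show ?thesis using \<open>0 \<le> c\<close> by simp
  qed
qed

lemma abs_cINF_diff_le:
  fixes f g :: "'x \<Rightarrow> real"
  assumes "\<And>x. x \<in> A \<Longrightarrow> \<bar>f x - g x\<bar> \<le> c" and "0 \<le> c"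
  shows "\<bar>(INF x\<in>A. f x) - (INF x\<in>A. g x)\<bar> \<le> c"
proof -
  have INF_eq: "(INF x\<in>A. h x) = - (SUP x\<in>A. - h x)" for h :: "'x \<Rightarrow> real"
    by (simp add: Inf_real_def image_image)
  have "\<bar>(SUP x\<in>A. - f x) - (SUP x\<in>A. - g x)\<bar> \<le> c"
    using assms by (intro abs_cSUP_diff_le) (auto simp: abs_minus_commute)
  then show ?thesis unfolding INF_eq by (simp add: abs_minus_commute)
qed

lemma dist_on_abs_sum_le:
  assumes "dist_on X q" and "\<And>x. x \<in> X \<Longrightarrow> \<bar>w x\<bar> \<le> N"
  shows "\<bar>\<Sum>x\<in>X. q x * w x\<bar> \<le> N"
proof -
  have "\<bar>\<Sum>x\<in>X. q x * w x\<bar> \<le> (\<Sum>x\<in>X. q x * N)"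
    using assms unfolding dist_on_def
    by (intro order.trans[OF sum_abs] sum_mono) (simp add: abs_mult mult_left_mono)
  also have "\<dots> = N"
    using assms(1) by (simp add: dist_on_def sum_distrib_right[symmetric])
  finally show ?thesis .
qed

lemma pert_in_states:
  assumes "mgspa_wf G" "s \<in> states G" "b \<in> jadvs G" "j < nag G"
  shows "pert G s (b j) \<in> states G"
proof -
  have "b j \<in> advs G j" using assms(3,4) unfolding jadvs_def by auto
  then show ?thesis using assms(1,2,4) unfolding mgspa_wf_def by blast
qed

lemma jprob_nonneg:
  assumes wf: "mgspa_wf G"
    and P: "\<forall>j<nag G. P j \<in> policies (states G) (acts G j)"
    and R: "\<forall>j<nag G. R j \<in> policies (states G) (advs G j)"
    and s: "s \<in> states G" and a: "a \<in> jacts G" and b: "b \<in> jadvs G"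
  shows "0 \<le> jprob G P R s a b"
proof -
  have "0 \<le> R j s (b j)" if "j < nag G" for j
    using R s b that unfolding policies_def dist_on_def jadvs_def by (auto simp: PiE_iff)
  moreover have "0 \<le> P j (pert G s (b j)) (a j)" if "j < nag G" for j
    using P a pert_in_states[OF wf s b that] that
    unfolding policies_def dist_on_def jacts_def by (auto simp: PiE_iff)
  ultimately show ?thesis unfolding jprob_def by (intro mult_nonneg_nonneg prod_nonneg) auto
qed

lemma sum_jprob_eq_1:
  assumes wf: "mgspa_wf G"
    and fin: "\<forall>i<nag G. finite (acts G i)" "\<forall>i<nag G. finite (advs G i)"
    and P: "\<forall>j<nag G. P j \<in> policies (states G) (acts G j)"
    and R: "\<forall>j<nag G. R j \<in> policies (states G) (advs G j)"
    and s: "s \<in> states G"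
  shows "(\<Sum>b\<in>jadvs G. \<Sum>a\<in>jacts G. jprob G P R s a b) = 1"
proof -
  have agents_marginal: "(\<Sum>a\<in>jacts G. jprob G P R s a b) = (\<Prod>j<nag G. R j s (b j))"
    if b: "b \<in> jadvs G" for b
  proof -
    have "(\<Sum>a\<in>jacts G. \<Prod>j<nag G. P j (pert G s (b j)) (a j))
        = (\<Prod>j<nag G. \<Sum>x\<in>acts G j. P j (pert G s (b j)) x)"
      unfolding jacts_def by (rule prod_sum_PiE[symmetric]) (use fin in auto)
    also have "\<dots> = 1"
      using P pert_in_states[OF wf s b] unfolding policies_def dist_on_def
      by (intro prod.neutral) auto
    finally show ?thesis unfolding jprob_def by (simp add: sum_distrib_left[symmetric])
  qed
  have "(\<Sum>b\<in>jadvs G. \<Sum>a\<in>jacts G. jprob G P R s a b) = (\<Sum>b\<in>jadvs G. \<Prod>j<nag G. R j s (b j))"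
    using agents_marginal by simp
  also have "\<dots> = (\<Prod>j<nag G. \<Sum>y\<in>advs G j. R j s y)"
    unfolding jadvs_def by (rule prod_sum_PiE[symmetric]) (use fin in auto)
  also have "\<dots> = 1"
    using R s unfolding policies_def dist_on_def by (intro prod.neutral) auto
  finally show ?thesis .
qed

lemma trans_mat_dist_on:
  assumes wf: "mgspa_wf G"
    and fin: "\<forall>i<nag G. finite (acts G i)" "\<forall>i<nag G. finite (advs G i)"
    and P: "\<forall>j<nag G. P j \<in> policies (states G) (acts G j)"
    and R: "\<forall>j<nag G. R j \<in> policies (states G) (advs G j)"
    and s: "s \<in> states G"
  shows "dist_on (states G) (trans_mat G P R s)"
  unfolding dist_on_def
proof
  show "\<forall>s'\<in>states G. 0 \<le> trans_mat G P R s s'"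
    using wf s jprob_nonneg[OF wf P R s] unfolding trans_mat_def mgspa_wf_def dist_on_def
    by (auto intro!: sum_nonneg mult_nonneg_nonneg)
  have "(\<Sum>s'\<in>states G. trans_mat G P R s s')
      = (\<Sum>b\<in>jadvs G. \<Sum>a\<in>jacts G. jprob G P R s a b * (\<Sum>s'\<in>states G. trans G s a b s'))"
    unfolding trans_mat_def sum_distrib_left
    by (subst sum.swap) (simp add: sum.swap[of _ "states G"])
  also have "\<dots> = (\<Sum>b\<in>jadvs G. \<Sum>a\<in>jacts G. jprob G P R s a b)"
    using wf s unfolding mgspa_wf_def dist_on_def by (intro sum.cong refl) auto
  also have "\<dots> = 1" by (rule sum_jprob_eq_1[OF wf fin P R s])
  finally show "(\<Sum>s'\<in>states G. trans_mat G P R s s') = 1" .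
qed

lemma apply_P_diff:
  "apply_P G P R v s - apply_P G P R u s = apply_P G P R (\<lambda>s'. v s' - u s') s"
  unfolding apply_P_def by (simp add: sum_subtractf right_diff_distrib)

lemma normV_upper:
  assumes "finite (states G)"
  shows "0 \<le> normV G w" and "i < nag G \<Longrightarrow> s \<in> states G \<Longrightarrow> \<bar>w i s\<bar> \<le> normV G w"
proof -
  have "{\<bar>w i s\<bar> | i s. i < nag G \<and> s \<in> states G} = (\<lambda>(i, s). \<bar>w i s\<bar>) ` ({..<nag G} \<times> states G)"
    by auto
  then have fin: "finite (insert 0 {\<bar>w i s\<bar> | i s. i < nag G \<and> s \<in> states G})"
    using assms by simp
  show "0 \<le> normV G w"
    unfolding normV_def using fin by (intro Max_ge) auto
  show "\<bar>w i s\<bar> \<le> normV G w" if "i < nag G" "s \<in> states G"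
    unfolding normV_def using fin that by (intro Max_ge) auto
qed

lemma normV_le:
  assumes "finite (states G)" and "0 \<le> c"
    and "\<And>i s. i < nag G \<Longrightarrow> s \<in> states G \<Longrightarrow> \<bar>w i s\<bar> \<le> c"
  shows "normV G w \<le> c"
proof -
  have "{\<bar>w i s\<bar> | i s. i < nag G \<and> s \<in> states G} = (\<lambda>(i, s). \<bar>w i s\<bar>) ` ({..<nag G} \<times> states G)"
    by auto
  then show ?thesis
    unfolding normV_def using assms by (subst Max_le_iff) auto
qed

lemma abs_minimax_op_diff_le:
  assumes wf: "mgspa_wf G" and "0 \<le> disc G"
    and fin: "\<forall>i<nag G. finite (acts G i)" "\<forall>i<nag G. finite (advs G i)"
    and pis: "\<forall>j<nag G. pis j \<in> policies (states G) (acts G j)"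
    and rhos: "\<forall>j<nag G. rhos j \<in> policies (states G) (advs G j)"
    and "i < nag G" and s: "s \<in> states G" and "0 \<le> N"
    and close: "\<And>s'. s' \<in> states G \<Longrightarrow> \<bar>v s' - u s'\<bar> \<le> N"
  shows "\<bar>minimax_op G pis rhos i v s - minimax_op G pis rhos i u s\<bar> \<le> disc G * N"
proof -
  have c: "0 \<le> disc G * N" using \<open>0 \<le> disc G\<close> \<open>0 \<le> N\<close> by simp
  show ?thesis
    unfolding minimax_op_def
  proof (rule abs_cSUP_diff_le[OF _ c], rule abs_cINF_diff_le[OF _ c])
    fix pol' rho'
    assume "pol' \<in> policies (states G) (acts G i)" "rho' \<in> policies (states G) (advs G i)"
    then have "dist_on (states G) (trans_mat G (pis(i := pol')) (rhos(i := rho')) s)"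
      using pis rhos by (intro trans_mat_dist_on[OF wf fin _ _ s]) auto
    then have "\<bar>apply_P G (pis(i := pol')) (rhos(i := rho')) (\<lambda>s'. v s' - u s') s\<bar> \<le> N"
      unfolding apply_P_def using close by (rule dist_on_abs_sum_le)
    then show "\<bar>exp_reward G (pis(i := pol')) (rhos(i := rho')) i s
                + disc G * apply_P G (pis(i := pol')) (rhos(i := rho')) v s
              - (exp_reward G (pis(i := pol')) (rhos(i := rho')) i s
                + disc G * apply_P G (pis(i := pol')) (rhos(i := rho')) u s)\<bar> \<le> disc G * N"
      using \<open>0 \<le> disc G\<close>
      by (simp add: apply_P_diff right_diff_distrib[symmetric] abs_mult mult_left_mono)
  qed
qed

theorem proposition1:
  fixes G :: "('s, 'a, 'b) mgspa"
    and pis :: "nat \<Rightarrow> 's \<Rightarrow> 'a \<Rightarrow> real"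
    and rhos :: "nat \<Rightarrow> 's \<Rightarrow> 'b \<Rightarrow> real"
    and Mi :: "nat \<Rightarrow> real" and M :: real
    and u v :: "nat \<Rightarrow> 's \<Rightarrow> real"
  assumes wf: "mgspa_wf G"
    and gamma: "0 \<le> disc G" "disc G < 1"
    and bounded: "\<forall>i<nag G. \<forall>s\<in>states G. \<forall>a\<in>jacts G. \<forall>b\<in>jadvs G.
                    \<bar>rew G i s a b\<bar> \<le> Mi i \<and> Mi i < M"
    and fin: "finite (states G)" "\<forall>i<nag G. finite (acts G i)" "\<forall>i<nag G. finite (advs G i)"
    and bij: "\<forall>s\<in>states G. \<forall>i<nag G. bij_betw (pert G s) (advs G i) (nbhd G s)"
    and common: "\<forall>i<nag G. \<forall>j<nag G. \<forall>s\<in>states G. \<forall>a\<in>jacts G. \<forall>b\<in>jadvs G.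
                    rew G i s a b = rew G j s a b"
    and eq: "robust_eq G pis rhos"
  shows "normV G (\<lambda>i s. L_op G pis rhos v i s - L_op G pis rhos u i s)
           \<le> disc G * normV G (\<lambda>i s. v i s - u i s)"
proof (rule normV_le[OF fin(1)])
  define N where "N = normV G (\<lambda>i s. v i s - u i s)"
  have "0 \<le> N" unfolding N_def by (rule normV_upper(1)[OF fin(1)])
  then show "0 \<le> disc G * N" using gamma(1) by simp
  have pis: "\<forall>j<nag G. pis j \<in> policies (states G) (acts G j)"
    and rhos: "\<forall>j<nag G. rhos j \<in> policies (states G) (advs G j)"
    using eq unfolding robust_eq_def by auto
  fix i s assume "i < nag G" "s \<in> states G"
  show "\<bar>L_op G pis rhos v i s - L_op G pis rhos u i s\<bar> \<le> disc G * N"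
    unfolding L_op_def
    using \<open>0 \<le> N\<close> normV_upper(2)[OF fin(1) \<open>i < nag G\<close>, of _ "\<lambda>i s. v i s - u i s"]
    by (intro abs_minimax_op_diff_le[OF wf gamma(1) fin(2,3) pis rhos \<open>i < nag G\<close> \<open>s \<in> states G\<close>])
       (simp_all add: N_def)
qed

end
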